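(* Let $H$ be a connected graph with $k=|V(H)|>1$ vertices that does not contain two true twins. Then no deterministic online algorithm (without advice) solving the Delayed Connected $H$-Node-Deletion Problem has competitive ratio smaller than $k$.
   Context: All graphs are finite, simple and undirected. Two distinct vertices are true twins if they have the same closed neighborhood $N[v]=N(v)\cup\{v\}$ (in particular they are adjacent). An induced copy of $H$ in $G$ is an induced subgraph isomorphic to $H$; $G$ is $H$-free if it has none. An online graph $G$ has vertices $v_1,\dots,v_n$ revealed one at a time (with edges to earlier vertices); $G_t=G[\{v_1,\dots,v_t\}]$. Delayed Connected $H$-Node-Deletion Problem (for a fixed connected $H$): an online algorithm must choose sets $S_1\subseteq\dots\subseteq S_n$ with $S_t\subseteq V(G_t)$ and $G_t-S_t$ $H$-free for each $t$, where $S_t$ depends only on $G_t$; the cost is $|S_n|$. $\mathrm{OPT}(G)$ is the minimum size of $S\subseteq V(G)$ with $G-S$ $H$-free. An algorithm is $c$-competitive if there is a constant $\alpha\ge0$ with cost $\le c\cdot \mathrm{OPT}(G)+\alpha$ for every online graph $G$; its competitive ratio is the infimum of such $c\ge1$. *)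

theory Defs
  imports Complex_Main "HOL-Library.Extended_Real"
begin

definition simple_graph :: "('a \<Rightarrow> 'a \<Rightarrow> bool) \<Rightarrow> bool" where
  "simple_graph E \<longleftrightarrow> (\<forall>u v. E u v \<longrightarrow> E v u) \<and> (\<forall>v. \<not> E v v)"

definition connected_graph :: "'b set \<Rightarrow> ('b \<Rightarrow> 'b \<Rightarrow> bool) \<Rightarrow> bool" where
  "connected_graph V E \<longleftrightarrow> V \<noteq> {} \<and>
     (\<forall>u\<in>V. \<forall>v\<in>V. (\<lambda>x y. x \<in> V \<and> y \<in> V \<and> E x y)\<^sup>*\<^sup>* u v)"

definition closed_nbhd :: "'b set \<Rightarrow> ('b \<Rightarrow> 'b \<Rightarrow> bool) \<Rightarrow> 'b \<Rightarrow> 'b set" where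
  "closed_nbhd V E v = {w \<in> V. E v w} \<union> {v}"

definition true_twins :: "'b set \<Rightarrow> ('b \<Rightarrow> 'b \<Rightarrow> bool) \<Rightarrow> 'b \<Rightarrow> 'b \<Rightarrow> bool" where
  "true_twins V E u v \<longleftrightarrow> u \<in> V \<and> v \<in> V \<and> u \<noteq> v \<and> closed_nbhd V E u = closed_nbhd V E v"

definition has_induced_copy ::
  "'a set \<Rightarrow> ('a \<Rightarrow> 'a \<Rightarrow> bool) \<Rightarrow> 'b set \<Rightarrow> ('b \<Rightarrow> 'b \<Rightarrow> bool) \<Rightarrow> bool" where
  "has_induced_copy X E VH EH \<longleftrightarrow>
     (\<exists>f. inj_on f VH \<and> f ` VH \<subseteq> X \<and>
          (\<forall>u\<in>VH. \<forall>v\<in>VH. EH u v \<longleftrightarrow> E (f u) (f v)))"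

definition H_free :: "'a set \<Rightarrow> ('a \<Rightarrow> 'a \<Rightarrow> bool) \<Rightarrow> 'b set \<Rightarrow> ('b \<Rightarrow> 'b \<Rightarrow> bool) \<Rightarrow> bool" where
  "H_free X E VH EH \<longleftrightarrow> \<not> has_induced_copy X E VH EH"

(* Online graphs: vertices v_1,...,v_n are 0,...,n-1 (vertex i is revealed at time i+1);
   E is a simple graph; G_t is the induced subgraph on {0..<t}. *)
definition restr :: "nat \<Rightarrow> (nat \<Rightarrow> nat \<Rightarrow> bool) \<Rightarrow> nat \<Rightarrow> nat \<Rightarrow> bool" where
  "restr t E u v \<longleftrightarrow> u < t \<and> v < t \<and> E u v"

(* A deterministic online algorithm maps the currently revealed graph G_t (given as t and
   the edge relation restricted to {0..<t}) to the deletion set S_t; hence S_t depends only on G_t. *)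
type_synonym online_alg = "nat \<Rightarrow> (nat \<Rightarrow> nat \<Rightarrow> bool) \<Rightarrow> nat set"

definition alg_set :: "online_alg \<Rightarrow> (nat \<Rightarrow> nat \<Rightarrow> bool) \<Rightarrow> nat \<Rightarrow> nat set" where
  "alg_set A E t = A t (restr t E)"

definition valid_alg :: "'b set \<Rightarrow> ('b \<Rightarrow> 'b \<Rightarrow> bool) \<Rightarrow> online_alg \<Rightarrow> bool" where
  "valid_alg VH EH A \<longleftrightarrow>
     (\<forall>E t. simple_graph E \<longrightarrow>
        alg_set A E t \<subseteq> {0..<t} \<and>
        alg_set A E t \<subseteq> alg_set A E (Suc t) \<and>
        H_free ({0..<t} - alg_set A E t) E VH EH)"

definition alg_cost :: "online_alg \<Rightarrow> nat \<Rightarrow> (nat \<Rightarrow> nat \<Rightarrow> bool) \<Rightarrow> nat" where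
  "alg_cost A n E = card (alg_set A E n)"

definition OPT :: "'b set \<Rightarrow> ('b \<Rightarrow> 'b \<Rightarrow> bool) \<Rightarrow> nat \<Rightarrow> (nat \<Rightarrow> nat \<Rightarrow> bool) \<Rightarrow> nat" where
  "OPT VH EH n E = (LEAST m. \<exists>S. S \<subseteq> {0..<n} \<and> card S = m \<and> H_free ({0..<n} - S) E VH EH)"

definition competitive :: "'b set \<Rightarrow> ('b \<Rightarrow> 'b \<Rightarrow> bool) \<Rightarrow> online_alg \<Rightarrow> real \<Rightarrow> bool" where
  "competitive VH EH A c \<longleftrightarrow>
     (\<exists>\<alpha>\<ge>0. \<forall>n E. simple_graph E \<longrightarrow>
        real (alg_cost A n E) \<le> c * real (OPT VH EH n E) + \<alpha>)"

(* infimum of all c >= 1 such that A is c-competitive (= \<infinity> if there are none) *)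
definition competitive_ratio :: "'b set \<Rightarrow> ('b \<Rightarrow> 'b \<Rightarrow> bool) \<Rightarrow> online_alg \<Rightarrow> ereal" where
  "competitive_ratio VH EH A = Inf {ereal c | c. c \<ge> 1 \<and> competitive VH EH A c}"

end

theory Submission
  imports Defs
begin

text \<open>The adversary builds a blow-up of H: every new vertex is put into a class (a vertex of H);
  two distinct vertices are adjacent iff their classes are equal or adjacent in H. A new vertex
  joins a class all of whose earlier members have already been deleted; such a class exists,
  for otherwise one surviving vertex per class would induce H. Hence the surviving vertices lie
  in distinct classes and the algorithm deletes all but at most k of the n vertices. Deleting a
  smallest class, of size at most n/k, destroys every induced copy of H: such a copy would meet
  only k - 1 classes, so two of its vertices would share a class and be true twins in H.\<close>

definition blowup :: "('b \<Rightarrow> 'b \<Rightarrow> bool) \<Rightarrow> (nat \<Rightarrow> 'b) \<Rightarrow> nat \<Rightarrow> nat \<Rightarrow> bool" where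
  "blowup EH g u v \<longleftrightarrow> u \<noteq> v \<and> (g u = g v \<or> EH (g u) (g v))"

lemma simple_graph_blowup: "simple_graph EH \<Longrightarrow> simple_graph (blowup EH g)"
  by (auto simp: simple_graph_def blowup_def)

lemma has_induced_copy_blowup:
  assumes "simple_graph EH" and "\<forall>r\<in>VH. \<exists>s\<in>X. g s = r"
  shows "has_induced_copy X (blowup EH g) VH EH"
proof -
  obtain f where f: "\<forall>r\<in>VH. f r \<in> X \<and> g (f r) = r"
    using assms(2) by metis
  have "inj_on f VH"
    using f by (intro inj_on_inverseI[where g = g]) simp
  moreover have "EH u v \<longleftrightarrow> blowup EH g (f u) (f v)" if "u \<in> VH" "v \<in> VH" for u v
    using assms(1) f that unfolding blowup_def simple_graph_def by metis
  ultimately show ?thesis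
    unfolding has_induced_copy_def using f by blast
qed

lemma H_free_blowup_few_classes:
  assumes "finite VH" and "finite X" and "\<not> (\<exists>u v. true_twins VH EH u v)"
    and "card (g ` X) < card VH"
  shows "H_free X (blowup EH g) VH EH"
  unfolding H_free_def has_induced_copy_def
proof
  assume "\<exists>f. inj_on f VH \<and> f ` VH \<subseteq> X \<and> (\<forall>u\<in>VH. \<forall>v\<in>VH. EH u v = blowup EH g (f u) (f v))"
  then obtain f where inj: "inj_on f VH" and img: "f ` VH \<subseteq> X"
    and edges: "\<forall>u\<in>VH. \<forall>v\<in>VH. EH u v = blowup EH g (f u) (f v)" by blast
  have "\<not> inj_on (g \<circ> f) VH"
  proof
    assume "inj_on (g \<circ> f) VH"
    then have "card VH \<le> card (g ` X)"
      using img assms(2) by (intro card_inj_on_le) auto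
    with assms(4) show False by simp
  qed
  then obtain u v where u: "u \<in> VH" and v: "v \<in> VH" and "u \<noteq> v" and same: "g (f u) = g (f v)"
    unfolding inj_on_def by auto
  have "EH u v" "EH v u"
    using u v same edges inj \<open>u \<noteq> v\<close> by (auto simp: blowup_def inj_on_eq_iff)
  moreover have "EH u w \<longleftrightarrow> EH v w" if "w \<in> VH" "w \<noteq> u" "w \<noteq> v" for w
    using that u v same edges inj by (auto simp: blowup_def inj_on_eq_iff)
  ultimately have "closed_nbhd VH EH u = closed_nbhd VH EH v"
    unfolding closed_nbhd_def using u v by auto
  with u v \<open>u \<noteq> v\<close> assms(3) show False
    by (auto simp: true_twins_def)
qed

lemma small_class_exists:
  fixes g :: "nat \<Rightarrow> 'b"
  assumes "finite V" and "V \<noteq> {}" and "\<And>s. s < n \<Longrightarrow> g s \<in> V"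
  shows "\<exists>r\<in>V. card V * card {s. s < n \<and> g s = r} \<le> n"
proof (rule ccontr)
  assume "\<not> ?thesis"
  then have "(\<Sum>r\<in>V. n) < (\<Sum>r\<in>V. card V * card {s. s < n \<and> g s = r})"
    using assms(1,2) by (intro sum_strict_mono) auto
  also have "\<dots> = card V * (\<Sum>r\<in>V. card {s. s < n \<and> g s = r})"
    by (simp add: sum_distrib_left)
  also have "(\<Sum>r\<in>V. card {s. s < n \<and> g s = r}) = card (\<Union>r\<in>V. {s. s < n \<and> g s = r})"
    using assms(1) by (intro card_UN_disjoint[symmetric]) auto
  also have "(\<Union>r\<in>V. {s. s < n \<and> g s = r}) = {0..<n}"
    using assms(3) by auto
  finally show False
    by simp
qed

lemma restr_cong: "(\<And>u v. u < t \<Longrightarrow> v < t \<Longrightarrow> E u v = E' u v) \<Longrightarrow> restr t E = restr t E'"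
  by (auto simp: restr_def fun_eq_iff)

lemma alg_set_blowup_cong:
  "(\<And>s. s < t \<Longrightarrow> g s = g' s) \<Longrightarrow> alg_set A (blowup EH g) t = alg_set A (blowup EH g') t"
  unfolding alg_set_def by (metis (mono_tags, lifting) blowup_def restr_cong)

definition admissible_class :: "'b set \<Rightarrow> ('b \<Rightarrow> 'b \<Rightarrow> bool) \<Rightarrow> online_alg \<Rightarrow> (nat \<Rightarrow> 'b) \<Rightarrow> nat \<Rightarrow> 'b \<Rightarrow> bool" where
  "admissible_class VH EH A g t r \<longleftrightarrow>
     r \<in> VH \<and> (\<forall>s<t. g s = r \<longrightarrow> s \<in> alg_set A (blowup EH g) t)"

text \<open>The value at t of the class function only depends on its values below t, so the
  classes are built by recursion on a prefix that is correct below t.\<close>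

primrec adversary_prefix :: "'b set \<Rightarrow> ('b \<Rightarrow> 'b \<Rightarrow> bool) \<Rightarrow> online_alg \<Rightarrow> nat \<Rightarrow> nat \<Rightarrow> 'b" where
  "adversary_prefix VH EH A 0 = (\<lambda>_. undefined)"
| "adversary_prefix VH EH A (Suc t) =
     (let g = adversary_prefix VH EH A t in g(t := SOME r. admissible_class VH EH A g t r))"

definition adversary_class :: "'b set \<Rightarrow> ('b \<Rightarrow> 'b \<Rightarrow> bool) \<Rightarrow> online_alg \<Rightarrow> nat \<Rightarrow> 'b" where
  "adversary_class VH EH A s = adversary_prefix VH EH A (Suc s) s"

lemma adversary_prefix_eq_class:
  "s < t \<Longrightarrow> adversary_prefix VH EH A t s = adversary_class VH EH A s"
  by (induction t) (auto simp: adversary_class_def Let_def less_Suc_eq)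

lemma adversary_class_eq:
  "adversary_class VH EH A t = (SOME r. admissible_class VH EH A (adversary_class VH EH A) t r)"
proof -
  have "admissible_class VH EH A (adversary_prefix VH EH A t) t =
        admissible_class VH EH A (adversary_class VH EH A) t"
    using alg_set_blowup_cong[of t "adversary_prefix VH EH A t" "adversary_class VH EH A"]
    by (simp add: admissible_class_def adversary_prefix_eq_class fun_eq_iff)
  then show ?thesis
    by (simp add: adversary_class_def Let_def)
qed

lemma admissible_class_exists:
  assumes "simple_graph EH" and "valid_alg VH EH A"
  shows "\<exists>r. admissible_class VH EH A g t r"
proof (rule ccontr)
  assume "\<nexists>r. admissible_class VH EH A g t r"
  then have "\<forall>r\<in>VH. \<exists>s\<in>{0..<t} - alg_set A (blowup EH g) t. g s = r"
    by (force simp: admissible_class_def)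
  then have "has_induced_copy ({0..<t} - alg_set A (blowup EH g) t) (blowup EH g) VH EH"
    by (rule has_induced_copy_blowup[OF assms(1)])
  with assms show False
    unfolding valid_alg_def H_free_def by (metis simple_graph_blowup)
qed

locale adversary =
  fixes VH :: "'b set" and EH :: "'b \<Rightarrow> 'b \<Rightarrow> bool" and A :: online_alg
  assumes finite_VH: "finite VH" and simple_EH: "simple_graph EH"
    and twin_free: "\<not> (\<exists>u v. true_twins VH EH u v)" and valid: "valid_alg VH EH A"
begin

abbreviation cls :: "nat \<Rightarrow> 'b" where
  "cls \<equiv> adversary_class VH EH A"

abbreviation G :: "nat \<Rightarrow> nat \<Rightarrow> bool" where
  "G \<equiv> blowup EH cls"

lemma admissible_cls: "admissible_class VH EH A cls t (cls t)"
  unfolding adversary_class_eq[of VH EH A t]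
  by (rule someI_ex) (rule admissible_class_exists[OF simple_EH valid])

lemma cls_in_VH: "cls t \<in> VH"
  using admissible_cls by (simp add: admissible_class_def)

lemma simple_G: "simple_graph G"
  by (rule simple_graph_blowup[OF simple_EH])

lemma alg_set_mono: "t \<le> t' \<Longrightarrow> alg_set A G t \<subseteq> alg_set A G t'"
  using valid simple_G unfolding valid_alg_def by (metis lift_Suc_mono_le)

lemma alg_cost_ge: "n - card VH \<le> alg_cost A n G"
proof -
  let ?S = "alg_set A G n"
  have S_sub: "?S \<subseteq> {0..<n}"
    using valid simple_G unfolding valid_alg_def by blast
  have deleted: "x \<in> ?S" if "x < y" "y < n" "cls x = cls y" for x y
    using admissible_cls[of y] alg_set_mono[of y n] that by (auto simp: admissible_class_def)
  have "inj_on cls ({0..<n} - ?S)"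
    by (rule inj_onI) (metis DiffD1 DiffD2 atLeastLessThan_iff deleted linorder_neqE_nat)
  then have "card ({0..<n} - ?S) \<le> card VH"
    using cls_in_VH by (intro card_inj_on_le[OF _ _ finite_VH]) auto
  moreover have "card ({0..<n} - ?S) = n - card ?S"
    using S_sub by (simp add: card_Diff_subset finite_subset)
  ultimately show ?thesis
    by (simp add: alg_cost_def)
qed

lemma OPT_le_class_size:
  assumes "r \<in> VH"
  shows "OPT VH EH n G \<le> card {s. s < n \<and> cls s = r}"
proof -
  let ?C = "{s. s < n \<and> cls s = r}"
  have "cls ` ({0..<n} - ?C) \<subseteq> VH - {r}"
    using cls_in_VH by auto
  then have "card (cls ` ({0..<n} - ?C)) < card VH"
    using assms finite_VH by (meson card_Diff1_less card_mono finite_Diff le_less_trans)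
  then have "H_free ({0..<n} - ?C) G VH EH"
    using finite_VH twin_free by (intro H_free_blowup_few_classes) auto
  then show ?thesis
    unfolding OPT_def by (intro Least_le exI[of _ ?C]) auto
qed

lemma adversarial_input:
  assumes "VH \<noteq> {}"
  shows "\<exists>E. simple_graph E \<and> n - card VH \<le> alg_cost A n E \<and> card VH * OPT VH EH n E \<le> n"
proof -
  obtain r where "r \<in> VH" and "card VH * card {s. s < n \<and> cls s = r} \<le> n"
    using small_class_exists[of VH n cls] finite_VH assms cls_in_VH by blast
  then have "card VH * OPT VH EH n G \<le> n"
    using OPT_le_class_size by (meson le_trans mult_le_mono2)
  then show ?thesis
    using simple_G alg_cost_ge by blast
qed

end

lemma competitive_imp_ge:
  assumes "k > 0" and "c \<ge> 0" and "competitive VH EH A c"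
    and "\<And>n. \<exists>E. simple_graph E \<and> n - k \<le> alg_cost A n E \<and> k * OPT VH EH n E \<le> n"
  shows "real k \<le> c"
proof (rule ccontr)
  assume "\<not> real k \<le> c"
  obtain \<alpha> where bound: "\<And>n E. simple_graph E \<Longrightarrow> real (alg_cost A n E) \<le> c * real (OPT VH EH n E) + \<alpha>"
    using assms(3) unfolding competitive_def by blast
  obtain n :: nat where n: "real n > real k * (real k + \<alpha>) / (real k - c)"
    using reals_Archimedean2 by blast
  obtain E where "simple_graph E" and cost: "n - k \<le> alg_cost A n E"
    and opt: "k * OPT VH EH n E \<le> n"
    using assms(4) by blast
  have "real n - real k \<le> real (alg_cost A n E)"
    using cost by linarith
  also have "\<dots> \<le> c * real (OPT VH EH n E) + \<alpha>"
    using bound \<open>simple_graph E\<close> by blast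
  finally have "real k * (real n - real k) \<le> real k * (c * real (OPT VH EH n E) + \<alpha>)"
    by (simp add: mult_left_mono)
  also have "\<dots> \<le> c * real n + real k * \<alpha>"
    using opt assms(2) mult_left_mono[of "real k * real (OPT VH EH n E)" "real n" c]
    by (simp add: algebra_simps flip: of_nat_mult)
  finally have "real n * (real k - c) \<le> real k * (real k + \<alpha>)"
    by (simp add: algebra_simps)
  with n \<open>\<not> real k \<le> c\<close> show False
    by (simp add: pos_divide_less_eq)
qed

lemma competitive_ratio_ge:
  assumes "k > 0"
    and "\<And>n. \<exists>E. simple_graph E \<and> n - k \<le> alg_cost A n E \<and> k * OPT VH EH n E \<le> n"
  shows "ereal (real k) \<le> competitive_ratio VH EH A"
  unfolding competitive_ratio_def
proof (rule Inf_greatest)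
  fix x assume "x \<in> {ereal c | c. c \<ge> 1 \<and> competitive VH EH A c}"
  then obtain c where "x = ereal c" "c \<ge> 1" "competitive VH EH A c" by blast
  then show "ereal (real k) \<le> x"
    using competitive_imp_ge[OF assms(1) _ _ assms(2)] by simp
qed

theorem mainTheorem5:
  fixes VH :: "'b set" and EH :: "'b \<Rightarrow> 'b \<Rightarrow> bool" and A :: online_alg
  assumes "finite VH" and "simple_graph EH" and "connected_graph VH EH"
    and "card VH > 1"
    and "\<not> (\<exists>u v. true_twins VH EH u v)"
    and "valid_alg VH EH A"
  shows "competitive_ratio VH EH A \<ge> ereal (real (card VH))"
proof -
  interpret adversary VH EH A
    using assms by unfold_locales
  show ?thesis
  proof (rule competitive_ratio_ge)
    show "card VH > 0"
      using assms(4) by simp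
    show "\<exists>E. simple_graph E \<and> n - card VH \<le> alg_cost A n E \<and> card VH * OPT VH EH n E \<le> n" for n
      using adversarial_input assms(4) by fastforce
  qed
qed

end
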